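(* Let $F$ and $G$ be finite nonempty sets of linear (affine) functions $\mathbb{R}\to\mathbb{R}$, and let $H=\{f\circ g : f\in F, g\in G\}$. For a finite set $S$ of such functions write $S_\downarrow(x)=\min_{f\in S}f(x)$ and $S_\uparrow(x)=\max_{f\in S}f(x)$. Then $H_\downarrow(x)=\min\{F_\downarrow(G_\downarrow(x)),F_\downarrow(G_\uparrow(x))\}$, $H_\uparrow(x)=\max\{F_\uparrow(G_\downarrow(x)),F_\uparrow(G_\uparrow(x))\}$, $p(H_\downarrow)\le 4p(F_\downarrow)+2p(G_\downarrow)+2p(G_\uparrow)$, and $p(H_\uparrow)\le 4p(F_\uparrow)+2p(G_\downarrow)+2p(G_\uparrow)$.
   Context: For a piecewise linear function $f:\mathbb{R}\to\mathbb{R}$, $p(f)$ denotes its number of (maximal linear) pieces. "Linear function" means a function of the form $x\mapsto ax+b$. *)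

theory Defs
  imports "HOL-Analysis.Analysis"
begin

definition linear_fun :: "(real \<Rightarrow> real) \<Rightarrow> bool" where
  "linear_fun f \<longleftrightarrow> (\<exists>a b. \<forall>x. f x = a * x + b)"

definition lower_env :: "(real \<Rightarrow> real) set \<Rightarrow> real \<Rightarrow> real" where
  "lower_env S x = Min ((\<lambda>f. f x) ` S)"

definition upper_env :: "(real \<Rightarrow> real) set \<Rightarrow> real \<Rightarrow> real" where
  "upper_env S x = Max ((\<lambda>f. f x) ` S)"

definition num_pieces :: "(real \<Rightarrow> real) \<Rightarrow> nat" where
  "num_pieces f = (LEAST n. \<exists>P. finite P \<and> card P = n \<and> \<Union>P = UNIV \<and> disjoint P \<and>
      (\<forall>I\<in>P. I \<noteq> {} \<and> is_interval I \<and> (\<exists>a b. \<forall>x\<in>I. f x = a * x + b)))"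

end

theory Submission
  imports Defs
begin

(* Every f in F is affine, hence monotone, so over g in G the value f (g x) is smallest
  at g x = lower_env G x or at g x = upper_env G x; this gives the formula for the lower
  envelope of H, and the upper envelope follows by negating F.

  For the piece count, let f_I be the member of F active on the piece I of lower_env F, and
  g_J the member of G active on the piece J of lower_env G (or of upper_env G). Then
  lower_env H is the lower envelope of the compositions f_I o g_J over the pairs (I, J) for
  which the image of J under lower_env G (or upper_env G) meets I, and a lower envelope of
  n affine functions has at most n pieces. As lower_env G is concave, the images of its increasing pieces are pairwise
  disjoint intervals, and so are those of its decreasing pieces, while the image of a
  constant piece meets only one I. Since two families of p and q disjoint intervals have
  at most p + q meeting pairs, there are at most 2 p(lower_env F) + p(lower_env G) pairs
  of the first kind, and likewise for upper_env G (which is convex). This even gives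
  p(lower_env H) <= 4 p(lower_env F) + p(lower_env G) + p(upper_env G). *)

definition piece_partition :: "(real \<Rightarrow> real) \<Rightarrow> real set set \<Rightarrow> bool" where
  "piece_partition h P \<longleftrightarrow> finite P \<and> \<Union>P = UNIV \<and> disjoint P \<and>
     (\<forall>I\<in>P. I \<noteq> {} \<and> is_interval I \<and> (\<exists>a b. \<forall>x\<in>I. h x = a * x + b))"

lemma num_pieces_eq_Least: "num_pieces h = (LEAST n. \<exists>P. piece_partition h P \<and> card P = n)"
  unfolding num_pieces_def piece_partition_def by (simp add: conj_ac)

lemma num_pieces_le_card: "piece_partition h P \<Longrightarrow> num_pieces h \<le> card P"
  unfolding num_pieces_eq_Least by (rule Least_le) blast

lemma piece_partition_num_pieces:
  "piece_partition h P \<Longrightarrow> \<exists>Q. piece_partition h Q \<and> card Q = num_pieces h"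
  unfolding num_pieces_eq_Least by (rule LeastI_ex) blast

lemma piece_partition_uminus_iff: "piece_partition (- h) P \<longleftrightarrow> piece_partition h P"
proof -
  have "(\<exists>a b. \<forall>x\<in>I. - h x = a * x + b) \<longleftrightarrow> (\<exists>a b. \<forall>x\<in>I. h x = a * x + b)" for I
    by (metis add.inverse_inverse minus_add_distrib mult_minus_left)
  then show ?thesis
    unfolding piece_partition_def by simp
qed

lemma num_pieces_uminus: "num_pieces (- h) = num_pieces h"
  by (simp only: num_pieces_eq_Least piece_partition_uminus_iff)

definition slope :: "(real \<Rightarrow> real) \<Rightarrow> real" where
  "slope l = l 1 - l 0"

lemma linear_fun_eq: "linear_fun l \<Longrightarrow> l x = slope l * x + l 0"
  unfolding linear_fun_def slope_def by auto

lemma linear_fun_diff: "linear_fun l \<Longrightarrow> l y - l x = slope l * (y - x)"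
  using linear_fun_eq[of l x] linear_fun_eq[of l y] by (simp add: right_diff_distrib)

lemma linear_fun_uminus: "linear_fun l \<Longrightarrow> linear_fun (- l)"
  unfolding linear_fun_def
proof (elim exE)
  fix a b assume "\<forall>x. l x = a * x + b"
  then have "\<forall>x. (- l) x = (- a) * x + (- b)" by simp
  then show "\<exists>a b. \<forall>x. (- l) x = a * x + b" by blast
qed

lemma linear_fun_comp: "linear_fun f \<Longrightarrow> linear_fun g \<Longrightarrow> linear_fun (f \<circ> g)"
  unfolding linear_fun_def
proof (elim exE)
  fix a b c d assume "\<forall>x. f x = a * x + b" "\<forall>x. g x = c * x + d"
  then have "\<forall>x. (f \<circ> g) x = (a * c) * x + (a * d + b)" by (simp add: algebra_simps)
  then show "\<exists>a b. \<forall>x. (f \<circ> g) x = a * x + b" by blast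
qed

lemma linear_fun_min_le:
  assumes "linear_fun l" "a \<le> t" "t \<le> b"
  shows "min (l a) (l b) \<le> l t"
proof (cases "0 \<le> slope l")
  case True
  then have "slope l * a \<le> slope l * t" using assms(2) by (simp add: mult_left_mono)
  then show ?thesis using linear_fun_eq[OF assms(1)] by (metis add_le_cancel_right min.coboundedI1)
next
  case False
  then have "slope l * b \<le> slope l * t" using assms(3) by (simp add: mult_left_mono_neg)
  then show ?thesis using linear_fun_eq[OF assms(1)] by (metis add_le_cancel_right min.coboundedI2)
qed

lemma linear_fun_le_leftward:
  assumes "linear_fun l" "linear_fun s" "slope s \<le> slope l" "l x \<le> s x" "y \<le> x"
  shows "l y \<le> s y"
proof -
  have "slope s * (x - y) \<le> slope l * (x - y)" using assms(3,5) by (simp add: mult_right_mono)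
  then show ?thesis
    using assms(4) linear_fun_diff[OF assms(1), of x y] linear_fun_diff[OF assms(2), of x y] by linarith
qed

lemma linear_fun_eq_on_two_points:
  assumes l: "linear_fun l" and l': "linear_fun l'"
    and "l x = l' x" "l y = l' y" "x \<noteq> y"
  shows "l = l'"
proof -
  have "slope l * (x - y) = slope l' * (x - y)"
    using assms(3,4) linear_fun_diff[OF l, of x y] linear_fun_diff[OF l', of x y] by linarith
  then have "slope l = slope l'" using \<open>x \<noteq> y\<close> by simp
  moreover have "l 0 = l' 0"
    using assms(3) linear_fun_eq[OF l, of x] linear_fun_eq[OF l', of x] calculation by simp
  ultimately show ?thesis
    using linear_fun_eq[OF l] linear_fun_eq[OF l'] by (intro ext) metis
qed

lemma is_interval_linear_fun_image:
  assumes "linear_fun l" "is_interval J"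
  shows "is_interval (l ` J)"
proof -
  have "l = (\<lambda>x. l 0 + slope l *\<^sub>R x)"
  proof
    show "l x = l 0 + slope l *\<^sub>R x" for x
      using linear_fun_eq[OF assms(1), of x] by simp
  qed
  then show ?thesis
    using assms(2) convex_affinity is_interval_convex_1 by metis
qed

lemma piece_partition_linear_fun: "linear_fun l \<Longrightarrow> piece_partition l {UNIV}"
  unfolding piece_partition_def linear_fun_def by simp

lemma lower_env_le: "finite S \<Longrightarrow> s \<in> S \<Longrightarrow> lower_env S x \<le> s x"
  unfolding lower_env_def by (rule Min_le) auto

lemma upper_env_ge: "finite S \<Longrightarrow> s \<in> S \<Longrightarrow> s x \<le> upper_env S x"
  unfolding upper_env_def by (rule Max_ge) auto

lemma lower_env_attained: "finite S \<Longrightarrow> S \<noteq> {} \<Longrightarrow> \<exists>s\<in>S. lower_env S x = s x"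
proof -
  assume "finite S" "S \<noteq> {}"
  then have "Min ((\<lambda>f. f x) ` S) \<in> (\<lambda>f. f x) ` S" by (intro Min_in) auto
  then show ?thesis unfolding lower_env_def by auto
qed

lemma upper_env_attained: "finite S \<Longrightarrow> S \<noteq> {} \<Longrightarrow> \<exists>s\<in>S. upper_env S x = s x"
proof -
  assume "finite S" "S \<noteq> {}"
  then have "Max ((\<lambda>f. f x) ` S) \<in> (\<lambda>f. f x) ` S" by (intro Max_in) auto
  then show ?thesis unfolding upper_env_def by auto
qed

lemma lower_env_insert:
  "finite S \<Longrightarrow> S \<noteq> {} \<Longrightarrow> lower_env (insert l S) x = min (l x) (lower_env S x)"
  unfolding lower_env_def by (simp add: Min_insert)

lemma upper_env_eq_uminus_lower_env:
  assumes "finite S" "S \<noteq> {}"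
  shows "upper_env S = - lower_env (uminus ` S)"
proof
  fix x
  have "(\<lambda>f. f x) ` uminus ` S = uminus ` (\<lambda>f. f x) ` S"
    by (simp add: image_image)
  moreover have "- Max ((\<lambda>f. f x) ` S) = Min (uminus ` (\<lambda>f. f x) ` S)"
    using assms by (intro minus_Max_eq_Min) auto
  ultimately show "upper_env S x = (- lower_env (uminus ` S)) x"
    unfolding lower_env_def upper_env_def by simp
qed

lemma lower_env_eqI:
  assumes "finite H" "L \<subseteq> H" "\<And>x. \<exists>l\<in>L. lower_env H x = l x"
  shows "lower_env L = lower_env H"
proof
  fix x
  show "lower_env L x = lower_env H x"
    unfolding lower_env_def[of L]
  proof (rule Min_eqI)
    show "finite ((\<lambda>l. l x) ` L)" using assms(1,2) finite_subset by blast
    show "lower_env H x \<le> y" if "y \<in> (\<lambda>l. l x) ` L" for y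
      using that assms(1,2) lower_env_le by blast
    show "lower_env H x \<in> (\<lambda>l. l x) ` L" using assms(3)[of x] by force
  qed
qed

lemma piece_partition_override:
  assumes P: "piece_partition h P" and A: "is_interval A" "is_interval (- A)"
    and g: "linear_fun g" and h': "\<And>x. x \<in> A \<Longrightarrow> h' x = g x" "\<And>x. x \<notin> A \<Longrightarrow> h' x = h x"
  shows "\<exists>Q. piece_partition h' Q \<and> card Q \<le> card P + 1"
proof -
  define Q where "Q = insert A ((\<lambda>I. I - A) ` P) - {{}}"
  have finP: "finite P" and covP: "\<Union>P = UNIV" and disP: "disjoint P"
    and pieceP: "\<And>I. I \<in> P \<Longrightarrow> is_interval I \<and> (\<exists>a b. \<forall>x\<in>I. h x = a * x + b)"
    using P unfolding piece_partition_def by auto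
  have "card Q \<le> card (insert A ((\<lambda>I. I - A) ` P))"
    unfolding Q_def using finP by (intro card_mono) auto
  also have "\<dots> \<le> card ((\<lambda>I. I - A) ` P) + 1"
    using card_insert_le_m1 by (simp add: card_insert_if finP)
  also have "\<dots> \<le> card P + 1"
    using card_image_le[OF finP] by simp
  finally have "card Q \<le> card P + 1" .
  moreover have "piece_partition h' Q"
    unfolding piece_partition_def
  proof (intro conjI)
    show "finite Q" unfolding Q_def using finP by simp
    show "\<Union>Q = UNIV" unfolding Q_def using covP by blast
    show "disjoint Q"
      unfolding Q_def using disP by (auto simp: disjoint_def)
    show "\<forall>J\<in>Q. J \<noteq> {} \<and> is_interval J \<and> (\<exists>a b. \<forall>x\<in>J. h' x = a * x + b)"
    proof
      fix J assume J: "J \<in> Q"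
      show "J \<noteq> {} \<and> is_interval J \<and> (\<exists>a b. \<forall>x\<in>J. h' x = a * x + b)"
      proof (cases "J = A")
        case True
        then have "\<forall>x\<in>J. h' x = slope g * x + g 0" using h'(1) linear_fun_eq[OF g] by metis
        then show ?thesis using True J A(1) unfolding Q_def by blast
      next
        case False
        then obtain I where I: "I \<in> P" "J = I - A" using J unfolding Q_def by auto
        then have "J = I \<inter> - A" by blast
        then have "is_interval J" using pieceP[OF I(1)] A(2) is_interval_Int by metis
        moreover obtain a b where "\<forall>x\<in>I. h x = a * x + b" using pieceP[OF I(1)] by blast
        then have "\<forall>x\<in>J. h' x = a * x + b" using I(2) h'(2) by simp
        ultimately show ?thesis using J unfolding Q_def by blast
      qed
    qed
  qed
  ultimately show ?thesis by blast
qed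

lemma lower_env_piece_partition:
  assumes "finite L" "L \<noteq> {}" "\<forall>l\<in>L. linear_fun l"
  shows "\<exists>P. piece_partition (lower_env L) P \<and> card P \<le> card L"
  using assms
proof (induction L rule: finite_ranking_induct[where f = slope])
  case empty
  then show ?case by simp
next
  case (insert l S)
  have l: "linear_fun l" and linS: "\<forall>s\<in>S. linear_fun s" using insert.prems by auto
  consider "l \<in> S" | "S = {}" | "l \<notin> S" "S \<noteq> {}" by blast
  then show ?case
  proof cases
    case 1
    then have "S \<noteq> {}" by blast
    then show ?thesis using 1 insert.IH linS by (simp add: insert_absorb)
  next
    case 2
    then have "lower_env (insert l S) = l" by (simp add: lower_env_def fun_eq_iff)
    then show ?thesis using piece_partition_linear_fun[OF l] 2 by auto
  next
    case 3
    obtain P where P: "piece_partition (lower_env S) P" "card P \<le> card S"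
      using insert.IH 3 linS by blast
    \<comment> \<open>As l has maximal slope, the region where l is active is a down-ray.\<close>
    define A where "A = {x. l x \<le> lower_env S x}"
    have down: "y \<in> A" if "x \<in> A" "y \<le> x" for x y
    proof -
      obtain s where s: "s \<in> S" "lower_env S y = s y"
        using lower_env_attained[OF insert.hyps(1) 3(2)] by blast
      have "l x \<le> s x"
        using that(1) lower_env_le[OF insert.hyps(1) s(1)] unfolding A_def by (meson order_trans mem_Collect_eq)
      then have "l y \<le> s y"
        using linear_fun_le_leftward[OF l _ insert.hyps(2)[OF s(1)] _ that(2)] linS s(1) by blast
      then show "y \<in> A" using s(2) unfolding A_def by simp
    qed
    have "is_interval A" "is_interval (- A)"
      unfolding is_interval_1 using down by (blast, blast)
    moreover have "lower_env (insert l S) x = l x" if "x \<in> A" for x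
      using that lower_env_insert[OF insert.hyps(1) 3(2)] unfolding A_def by simp
    moreover have "lower_env (insert l S) x = lower_env S x" if "x \<notin> A" for x
      using that lower_env_insert[OF insert.hyps(1) 3(2)] unfolding A_def by simp
    ultimately obtain Q where "piece_partition (lower_env (insert l S)) Q" "card Q \<le> card P + 1"
      using piece_partition_override[OF P(1) _ _ l] by metis
    moreover have "card P + 1 \<le> card (insert l S)"
      using P(2) 3(1) insert.hyps(1) by simp
    ultimately show ?thesis by auto
  qed
qed

lemma upper_env_piece_partition:
  assumes "finite L" "L \<noteq> {}" "\<forall>l\<in>L. linear_fun l"
  shows "\<exists>P. piece_partition (upper_env L) P \<and> card P \<le> card L"
proof -
  have "\<forall>l\<in>uminus ` L. linear_fun l" using assms(3) linear_fun_uminus by blast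
  then obtain P where P: "piece_partition (lower_env (uminus ` L)) P" "card P \<le> card (uminus ` L)"
    using lower_env_piece_partition assms(1,2) by blast
  have "card (uminus ` L) \<le> card L" using assms(1) by (rule card_image_le)
  then show ?thesis
    using P piece_partition_uminus_iff upper_env_eq_uminus_lower_env[OF assms(1,2)] by fastforce
qed

lemma num_pieces_lower_env_le:
  "finite L \<Longrightarrow> L \<noteq> {} \<Longrightarrow> \<forall>l\<in>L. linear_fun l \<Longrightarrow> num_pieces (lower_env L) \<le> card L"
  using lower_env_piece_partition num_pieces_le_card le_trans by metis

lemma affine_piece_eq_member:
  assumes S: "finite S" "\<forall>s\<in>S. linear_fun s" and active: "\<forall>y. \<exists>s\<in>S. h y = s y"
    and I: "is_interval I" "I \<noteq> {}" and ab: "\<forall>x\<in>I. h x = a * x + b"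
  shows "\<exists>s\<in>S. \<forall>y\<in>I. h y = s y"
proof (cases "\<exists>u. I = {u}")
  case True
  then show ?thesis using active by fastforce
next
  case False
  obtain u where u: "u \<in> I" using I(2) by blast
  then obtain v where v: "v \<in> I" "v \<noteq> u" using False by blast
  then obtain p q where pq: "p \<in> I" "q \<in> I" "p < q" using u linorder_neq_iff by blast
  have "{p..q} \<subseteq> I" using I(1) pq(1,2) unfolding is_interval_1 by (meson atLeastAtMost_iff subsetI)
  then have "infinite I" using infinite_Icc[OF pq(3)] finite_subset by blast
  moreover have "I \<subseteq> (\<Union>s\<in>S. {y \<in> I. h y = s y})" using active by blast
  ultimately obtain s where s: "s \<in> S" and inf: "infinite {y \<in> I. h y = s y}"
    using S(1) finite_subset by blast
  define T where "T = {y \<in> I. h y = s y}"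
  obtain y1 where y1: "y1 \<in> T" using inf unfolding T_def by (metis finite.emptyI ex_in_conv)
  have "\<not> T \<subseteq> {y1}" using inf finite_subset unfolding T_def by blast
  then obtain y2 where y2: "y2 \<in> T" "y2 \<noteq> y1" by blast
  have lin: "linear_fun (\<lambda>x. a * x + b)" unfolding linear_fun_def by blast
  have "a * y1 + b = s y1" "a * y2 + b = s y2"
    using y1 y2(1) ab unfolding T_def by auto
  then have "(\<lambda>x. a * x + b) = s"
    using linear_fun_eq_on_two_points[OF lin _ _ _ y2(2)[symmetric]] S(2) s by blast
  then show ?thesis using s ab by auto
qed

lemma piece_partition_choose_members:
  assumes "piece_partition h P" "finite S" "\<forall>s\<in>S. linear_fun s" "\<forall>y. \<exists>s\<in>S. h y = s y"
  shows "\<exists>c. \<forall>I\<in>P. c I \<in> S \<and> (\<forall>y\<in>I. h y = c I y)"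
proof -
  have "\<forall>I\<in>P. \<exists>s\<in>S. \<forall>y\<in>I. h y = s y"
  proof
    fix I assume "I \<in> P"
    then have "is_interval I" "I \<noteq> {}" "\<exists>a b. \<forall>x\<in>I. h x = a * x + b"
      using assms(1) unfolding piece_partition_def by auto
    then show "\<exists>s\<in>S. \<forall>y\<in>I. h y = s y"
      using affine_piece_eq_member[OF assms(2-4)] by blast
  qed
  then show ?thesis unfolding Bex_def by (rule bchoice)
qed

definition meeting_pairs :: "real set set \<Rightarrow> (real \<Rightarrow> real) \<Rightarrow> real set set \<Rightarrow> (real set \<times> real set) set" where
  "meeting_pairs P \<phi> Q = {(I, J). I \<in> P \<and> J \<in> Q \<and> \<phi> ` J \<inter> I \<noteq> {}}"

lemma finite_meeting_pairs: "finite P \<Longrightarrow> finite Q \<Longrightarrow> finite (meeting_pairs P \<phi> Q)"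
  by (rule finite_subset[of _ "P \<times> Q"]) (auto simp: meeting_pairs_def)

lemma meeting_pairs_Un: "meeting_pairs P \<phi> (A \<union> B) = meeting_pairs P \<phi> A \<union> meeting_pairs P \<phi> B"
  unfolding meeting_pairs_def by auto

definition ends_within :: "real set \<Rightarrow> real set \<Rightarrow> bool" where
  "ends_within I K \<longleftrightarrow> (\<forall>p\<in>I. \<exists>c\<in>I \<inter> K. p \<le> c)"

lemma ends_within_cases:
  assumes "is_interval I" "is_interval K" "I \<inter> K \<noteq> {}"
  shows "ends_within I K \<or> ends_within K I"
proof (rule ccontr)
  assume "\<not> ?thesis"
  then obtain p q where p: "p \<in> I" "\<forall>c\<in>I \<inter> K. \<not> p \<le> c" and q: "q \<in> K" "\<forall>c\<in>K \<inter> I. \<not> q \<le> c"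
    unfolding ends_within_def by blast
  obtain c where c: "c \<in> I" "c \<in> K" using assms(3) by blast
  show False
  proof (cases "p \<le> q")
    case True
    have "c \<le> p" using p(2) c by (meson IntI linorder_linear)
    then have "p \<in> K" using mem_is_interval_1_I[OF assms(2), of c q p] c(2) q(1) True by blast
    then show False using p by blast
  next
    case False
    have "c \<le> q" using q(2) c by (meson IntI linorder_linear)
    then have "q \<in> I" using mem_is_interval_1_I[OF assms(1), of c p q] c(1) p(1) False by simp
    then show False using q by blast
  qed
qed

lemma ends_within_Int_ne:
  assumes "ends_within I K" "ends_within I K'" "I \<inter> K' \<noteq> {}" "is_interval K'"
  shows "K \<inter> K' \<noteq> {}"
proof -
  obtain c' where c': "c' \<in> I \<inter> K'" using assms(3) by blast
  then obtain c where c: "c \<in> I \<inter> K" "c' \<le> c" using assms(1) unfolding ends_within_def by blast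
  then obtain c'' where c'': "c'' \<in> I \<inter> K'" "c \<le> c''" using assms(2) unfolding ends_within_def by blast
  have "c \<in> K'" using mem_is_interval_1_I[OF assms(4)] c' c c'' by blast
  then show ?thesis using c by blast
qed

lemma card_meeting_pairs_intervals_le:
  assumes finP: "finite P" and finQ: "finite Q" and disP: "disjoint P" and disQ: "disjoint Q"
    and intP: "\<forall>I\<in>P. is_interval I" and intQ: "\<forall>K\<in>Q. is_interval K"
  shows "card (meeting_pairs P id Q) \<le> card P + card Q"
proof -
  \<comment> \<open>Charge a meeting pair to the one of its two intervals that ends inside the other.\<close>
  define tag where "tag = (\<lambda>(I, K). if ends_within I K then Inl I else Inr K :: real set + real set)"
  have "inj_on tag (meeting_pairs P id Q)"
  proof (rule inj_onI)
    fix x y assume x: "x \<in> meeting_pairs P id Q" and y: "y \<in> meeting_pairs P id Q" and eq: "tag x = tag y"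
    obtain I K I' K' where xy: "x = (I, K)" "y = (I', K')" by (cases x, cases y)
    have m: "I \<in> P" "K \<in> Q" "I \<inter> K \<noteq> {}" "I' \<in> P" "K' \<in> Q" "I' \<inter> K' \<noteq> {}"
      using x y unfolding xy meeting_pairs_def by auto
    show "x = y"
    proof (cases "ends_within I K")
      case True
      then have "ends_within I K'" "I = I'" using eq unfolding xy tag_def by (auto split: if_splits)
      then have "K \<inter> K' \<noteq> {}" using ends_within_Int_ne[OF True] m intQ by blast
      then have "K = K'" using disjointD[OF disQ] m by blast
      then show ?thesis using xy \<open>I = I'\<close> by simp
    next
      case False
      then have "\<not> ends_within I' K'" "K = K'" using eq unfolding xy tag_def by (auto split: if_splits)
      then have "ends_within K I" "ends_within K I'"
        using False ends_within_cases m intP intQ by (metis Int_commute)+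
      then have "I \<inter> I' \<noteq> {}"
        using ends_within_Int_ne m intP \<open>K = K'\<close> by (metis Int_commute)
      then have "I = I'" using disjointD[OF disP] m by blast
      then show ?thesis using xy \<open>K = K'\<close> by simp
    qed
  qed
  moreover have "tag ` meeting_pairs P id Q \<subseteq> P <+> Q"
    unfolding tag_def meeting_pairs_def by (auto split: if_splits)
  ultimately have "card (meeting_pairs P id Q) \<le> card (P <+> Q)"
    using finP finQ by (intro card_inj_on_le) auto
  then show ?thesis using card_Plus[OF finP finQ] by simp
qed

lemma card_meeting_pairs_disjoint_images_le:
  assumes P: "finite P" "disjoint P" "\<forall>I\<in>P. is_interval I"
    and Js: "finite Js" "\<forall>J\<in>Js. J \<noteq> {} \<and> is_interval (\<phi> ` J)" "disjoint_family_on (image \<phi>) Js"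
  shows "card (meeting_pairs P \<phi> Js) \<le> card P + card Js"
proof -
  define Q where "Q = image \<phi> ` Js"
  have inj: "inj_on (image \<phi>) Js"
  proof (rule inj_onI)
    fix J J' assume J: "J \<in> Js" "J' \<in> Js" "\<phi> ` J = \<phi> ` J'"
    moreover have "\<phi> ` J \<noteq> {}" using Js(2) J(1) by blast
    ultimately show "J = J'" using Js(3) unfolding disjoint_family_on_def by (metis Int_absorb)
  qed
  have "card (meeting_pairs P \<phi> Js) \<le> card (meeting_pairs P id Q)"
  proof (rule card_inj_on_le)
    show "inj_on (\<lambda>(I, J). (I, \<phi> ` J)) (meeting_pairs P \<phi> Js)"
    proof (rule inj_onI)
      fix x y assume "x \<in> meeting_pairs P \<phi> Js" "y \<in> meeting_pairs P \<phi> Js"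
        and eq: "(\<lambda>(I, J). (I, \<phi> ` J)) x = (\<lambda>(I, J). (I, \<phi> ` J)) y"
      moreover obtain I J I' J' where xy: "x = (I, J)" "y = (I', J')" by (cases x, cases y)
      ultimately have "J \<in> Js" "J' \<in> Js" "I = I'" "\<phi> ` J = \<phi> ` J'"
        unfolding meeting_pairs_def by auto
      then show "x = y" using inj_onD[OF inj] xy by blast
    qed
    show "(\<lambda>(I, J). (I, \<phi> ` J)) ` meeting_pairs P \<phi> Js \<subseteq> meeting_pairs P id Q"
      unfolding meeting_pairs_def Q_def by auto
    show "finite (meeting_pairs P id Q)"
      using P(1) Js(1) unfolding Q_def by (intro finite_meeting_pairs) auto
  qed
  also have "\<dots> \<le> card P + card Q"
    using P Js unfolding Q_def
    by (intro card_meeting_pairs_intervals_le) (auto intro: disjoint_family_on_disjoint_image)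
  also have "card Q \<le> card Js"
    unfolding Q_def using Js(1) by (rule card_image_le)
  finally show ?thesis by simp
qed

lemma card_meeting_pairs_constant_le:
  assumes "disjoint P" "finite Js" "\<forall>J\<in>Js. \<exists>c. \<phi> ` J \<subseteq> {c}"
  shows "card (meeting_pairs P \<phi> Js) \<le> card Js"
proof (rule card_inj_on_le)
  show "inj_on snd (meeting_pairs P \<phi> Js)"
  proof (rule inj_onI)
    fix x y assume x: "x \<in> meeting_pairs P \<phi> Js" and y: "y \<in> meeting_pairs P \<phi> Js" and "snd x = snd y"
    then obtain I I' J where xy: "x = (I, J)" "y = (I', J)" by (cases x, cases y) simp
    then have m: "I \<in> P" "I' \<in> P" "J \<in> Js" "\<phi> ` J \<inter> I \<noteq> {}" "\<phi> ` J \<inter> I' \<noteq> {}"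
      using x y unfolding meeting_pairs_def by auto
    obtain c where c: "\<phi> ` J \<subseteq> {c}" using assms(3) m(3) by blast
    have "c \<in> I" "c \<in> I'" using m(4,5) c by auto
    then have "I = I'" using disjointD[OF assms(1) m(1,2)] by blast
    then show "x = y" using xy by simp
  qed
  show "snd ` meeting_pairs P \<phi> Js \<subseteq> Js" unfolding meeting_pairs_def by auto
qed (rule assms(2))

lemma card_meeting_pairs_le:
  assumes P: "finite P" "disjoint P" "\<forall>I\<in>P. is_interval I"
    and Js: "piece_partition \<phi> Js" "\<forall>J\<in>Js. linear_fun (g J) \<and> (\<forall>x\<in>J. \<phi> x = g J x)"
    and sep: "\<And>J J' x y. J \<in> Js \<Longrightarrow> J' \<in> Js \<Longrightarrow> x \<in> J \<Longrightarrow> y \<in> J' \<Longrightarrow> x \<noteq> y \<Longrightarrow>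
      0 < slope (g J) * slope (g J') \<Longrightarrow> \<phi> x \<noteq> \<phi> y"
  shows "card (meeting_pairs P \<phi> Js) \<le> 2 * card P + card Js"
proof -
  have finJs: "finite Js" and disJs: "disjoint Js"
    and pieces: "\<And>J. J \<in> Js \<Longrightarrow> J \<noteq> {} \<and> is_interval J"
    using Js(1) unfolding piece_partition_def by auto
  define Jp where "Jp = {J \<in> Js. 0 < slope (g J)}"
  define Jn where "Jn = {J \<in> Js. slope (g J) < 0}"
  define Jz where "Jz = {J \<in> Js. slope (g J) = 0}"
  have Js_split: "Js = Jp \<union> Jn \<union> Jz" unfolding Jp_def Jn_def Jz_def by auto
  have fin: "finite Jp" "finite Jn" "finite Jz" using finJs unfolding Jp_def Jn_def Jz_def by auto
  have image_interval: "\<forall>J\<in>X. J \<noteq> {} \<and> is_interval (\<phi> ` J)" if "X \<subseteq> Js" for X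
  proof
    fix J assume "J \<in> X"
    then have J: "J \<in> Js" using that by blast
    have "\<phi> ` J = g J ` J" using Js(2) J by (intro image_cong) auto
    then show "J \<noteq> {} \<and> is_interval (\<phi> ` J)"
      using is_interval_linear_fun_image Js(2) pieces J by metis
  qed
  have disjoint_images: "disjoint_family_on (image \<phi>) X"
    if X: "X \<subseteq> Js" "\<And>J J'. J \<in> X \<Longrightarrow> J' \<in> X \<Longrightarrow> 0 < slope (g J) * slope (g J')" for X
    unfolding disjoint_family_on_def
  proof (intro ballI impI)
    fix J J' assume J: "J \<in> X" "J' \<in> X" "J \<noteq> J'"
    have "x \<noteq> y" if "x \<in> J" "y \<in> J'" for x y
      using disjointD[OF disJs] X(1) J that by blast
    then show "\<phi> ` J \<inter> \<phi> ` J' = {}"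
      using sep[of J J'] X J by blast
  qed
  have "card (meeting_pairs P \<phi> Jp) \<le> card P + card Jp"
    using P fin(1) image_interval disjoint_images[of Jp]
    by (intro card_meeting_pairs_disjoint_images_le) (auto simp: Jp_def)
  moreover have "card (meeting_pairs P \<phi> Jn) \<le> card P + card Jn"
    using P fin(2) image_interval disjoint_images[of Jn]
    by (intro card_meeting_pairs_disjoint_images_le) (auto simp: Jn_def mult_neg_neg)
  moreover have "card (meeting_pairs P \<phi> Jz) \<le> card Jz"
  proof (rule card_meeting_pairs_constant_le[OF P(2) fin(3)])
    show "\<forall>J\<in>Jz. \<exists>c. \<phi> ` J \<subseteq> {c}"
    proof
      fix J assume J: "J \<in> Jz"
      have "\<phi> x = g J 0" if "x \<in> J" for x
        using Js(2) linear_fun_eq[of "g J" x] J that unfolding Jz_def by auto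
      then show "\<exists>c. \<phi> ` J \<subseteq> {c}" by blast
    qed
  qed
  moreover have "card (meeting_pairs P \<phi> Js) \<le>
      card (meeting_pairs P \<phi> Jp) + card (meeting_pairs P \<phi> Jn) + card (meeting_pairs P \<phi> Jz)"
    unfolding Js_split meeting_pairs_Un by (meson card_Un_le add_right_mono order_trans)
  moreover have "card Js = card Jp + card Jn + card Jz"
  proof -
    have "card Js = card (Jp \<union> Jn) + card Jz"
      unfolding Js_split using fin by (intro card_Un_disjoint) (auto simp: Jp_def Jn_def Jz_def)
    also have "card (Jp \<union> Jn) = card Jp + card Jn"
      using fin by (intro card_Un_disjoint) (auto simp: Jp_def Jn_def)
    finally show ?thesis .
  qed
  ultimately show ?thesis by linarith
qed

lemma lower_env_neq_of_same_slope_sign: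
  assumes G: "finite G" "g \<in> G" "g' \<in> G" "linear_fun g" "linear_fun g'"
    and at: "lower_env G x = g x" "lower_env G y = g' y"
    and "x \<noteq> y" "0 < slope g * slope g'"
  shows "lower_env G x \<noteq> lower_env G y"
proof -
  have "0 < slope g' * (y - x) \<or> 0 < slope g * (x - y)"
    using assms(8,9) by (auto simp: zero_less_mult_iff)
  then show ?thesis
  proof
    assume "0 < slope g' * (y - x)"
    then have "lower_env G x < lower_env G y"
      using lower_env_le[OF G(1,3), of x] linear_fun_diff[OF G(5), of y x] at(2) by linarith
    then show ?thesis by simp
  next
    assume "0 < slope g * (x - y)"
    then have "lower_env G y < lower_env G x"
      using lower_env_le[OF G(1,2), of y] linear_fun_diff[OF G(4), of x y] at(1) by linarith
    then show ?thesis by simp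
  qed
qed

lemma upper_env_neq_of_same_slope_sign:
  assumes G: "finite G" "g \<in> G" "g' \<in> G" "linear_fun g" "linear_fun g'"
    and at: "upper_env G x = g x" "upper_env G y = g' y"
    and "x \<noteq> y" "0 < slope g * slope g'"
  shows "upper_env G x \<noteq> upper_env G y"
proof -
  have "0 < slope g * (y - x) \<or> 0 < slope g' * (x - y)"
    using assms(8,9) by (auto simp: zero_less_mult_iff)
  then show ?thesis
  proof
    assume "0 < slope g * (y - x)"
    then have "upper_env G x < upper_env G y"
      using upper_env_ge[OF G(1,2), of y] linear_fun_diff[OF G(4), of y x] at(1) by linarith
    then show ?thesis by simp
  next
    assume "0 < slope g' * (x - y)"
    then have "upper_env G y < upper_env G x"
      using upper_env_ge[OF G(1,3), of x] linear_fun_diff[OF G(5), of x y] at(2) by linarith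
    then show ?thesis by simp
  qed
qed

lemma card_meeting_pairs_lower_env_le:
  assumes P: "finite P" "disjoint P" "\<forall>I\<in>P. is_interval I"
    and G: "finite G" "\<forall>g\<in>G. linear_fun g"
    and PG: "piece_partition (lower_env G) PG" "\<forall>J\<in>PG. c J \<in> G \<and> (\<forall>x\<in>J. lower_env G x = c J x)"
  shows "card (meeting_pairs P (lower_env G) PG) \<le> 2 * card P + card PG"
proof (rule card_meeting_pairs_le[OF P PG(1)])
  show "\<forall>J\<in>PG. linear_fun (c J) \<and> (\<forall>x\<in>J. lower_env G x = c J x)"
    using G(2) PG(2) by blast
  show "lower_env G x \<noteq> lower_env G y"
    if "J \<in> PG" "J' \<in> PG" "x \<in> J" "y \<in> J'" "x \<noteq> y" "0 < slope (c J) * slope (c J')" for J J' x y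
    using that G PG(2) by (intro lower_env_neq_of_same_slope_sign[OF G(1)]) auto
qed

lemma card_meeting_pairs_upper_env_le:
  assumes P: "finite P" "disjoint P" "\<forall>I\<in>P. is_interval I"
    and G: "finite G" "\<forall>g\<in>G. linear_fun g"
    and PG: "piece_partition (upper_env G) PG" "\<forall>J\<in>PG. c J \<in> G \<and> (\<forall>x\<in>J. upper_env G x = c J x)"
  shows "card (meeting_pairs P (upper_env G) PG) \<le> 2 * card P + card PG"
proof (rule card_meeting_pairs_le[OF P PG(1)])
  show "\<forall>J\<in>PG. linear_fun (c J) \<and> (\<forall>x\<in>J. upper_env G x = c J x)"
    using G(2) PG(2) by blast
  show "upper_env G x \<noteq> upper_env G y"
    if "J \<in> PG" "J' \<in> PG" "x \<in> J" "y \<in> J'" "x \<noteq> y" "0 < slope (c J) * slope (c J')" for J J' x y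
    using that G PG(2) by (intro upper_env_neq_of_same_slope_sign[OF G(1)]) auto
qed

lemma lower_env_comp:
  assumes F: "finite F" "F \<noteq> {}" "\<forall>f\<in>F. linear_fun f" and G: "finite G" "G \<noteq> {}"
  shows "lower_env {f \<circ> g | f g. f \<in> F \<and> g \<in> G} x
    = min (lower_env F (lower_env G x)) (lower_env F (upper_env G x))"
    (is "lower_env ?H x = min (lower_env F ?a) (lower_env F ?b)")
  unfolding lower_env_def[of ?H]
proof (rule Min_eqI)
  show "finite ((\<lambda>h. h x) ` ?H)" using F(1) G(1) by (simp add: finite_image_set2)
next
  fix y assume "y \<in> (\<lambda>h. h x) ` ?H"
  then obtain f g where fg: "f \<in> F" "g \<in> G" "y = f (g x)" by auto
  have "?a \<le> g x" "g x \<le> ?b" using lower_env_le upper_env_ge G(1) fg(2) by blast+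
  then have "min (f ?a) (f ?b) \<le> y" using linear_fun_min_le F(3) fg by blast
  moreover have "min (lower_env F ?a) (lower_env F ?b) \<le> min (f ?a) (f ?b)"
    using lower_env_le[OF F(1) fg(1)] by (rule min.mono) (rule lower_env_le[OF F(1) fg(1)])
  ultimately show "min (lower_env F ?a) (lower_env F ?b) \<le> y" by linarith
next
  obtain g1 g2 where g: "g1 \<in> G" "g1 x = ?a" "g2 \<in> G" "g2 x = ?b"
    using lower_env_attained[OF G] upper_env_attained[OF G] by metis
  obtain f1 f2 where f: "f1 \<in> F" "f1 ?a = lower_env F ?a" "f2 \<in> F" "f2 ?b = lower_env F ?b"
    using lower_env_attained[OF F(1,2)] by metis
  have "(f1 \<circ> g1) x \<in> (\<lambda>h. h x) ` ?H" "(f2 \<circ> g2) x \<in> (\<lambda>h. h x) ` ?H"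
    using f(1,3) g(1,3) by blast+
  then show "min (lower_env F ?a) (lower_env F ?b) \<in> (\<lambda>h. h x) ` ?H"
    using f(2,4) g(2,4) by (simp add: min_def)
qed

lemma uminus_comp_image:
  fixes F :: "('b \<Rightarrow> 'c::uminus) set" and G :: "('a \<Rightarrow> 'b) set"
  shows "uminus ` {f \<circ> g | f g. f \<in> F \<and> g \<in> G} = {f \<circ> g | f g. f \<in> uminus ` F \<and> g \<in> G}"
proof -
  have neg: "- (f \<circ> g) = (- f) \<circ> g" for f :: "'b \<Rightarrow> 'c" and g :: "'a \<Rightarrow> 'b"
    by (simp add: fun_eq_iff)
  show ?thesis
  proof (intro set_eqI iffI)
    fix h assume "h \<in> uminus ` {f \<circ> g | f g. f \<in> F \<and> g \<in> G}"
    then obtain f g where fg: "f \<in> F" "g \<in> G" and "h = - (f \<circ> g)" by blast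
    then have "h = (- f) \<circ> g" by (simp only: neg)
    with fg show "h \<in> {f \<circ> g | f g. f \<in> uminus ` F \<and> g \<in> G}" by blast
  next
    fix h assume "h \<in> {f \<circ> g | f g. f \<in> uminus ` F \<and> g \<in> G}"
    then obtain f g where fg: "f \<in> F" "g \<in> G" and "h = (- f) \<circ> g" by blast
    then have "h = - (f \<circ> g)" by (simp only: neg)
    with fg show "h \<in> uminus ` {f \<circ> g | f g. f \<in> F \<and> g \<in> G}" by blast
  qed
qed

lemma lower_env_minimal_partitionE:
  assumes "finite S" "S \<noteq> {}" "\<forall>s\<in>S. linear_fun s"
  obtains P c where "piece_partition (lower_env S) P" "card P = num_pieces (lower_env S)"
    "\<forall>I\<in>P. c I \<in> S \<and> (\<forall>y\<in>I. lower_env S y = c I y)"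
proof -
  obtain P where P: "piece_partition (lower_env S) P" "card P = num_pieces (lower_env S)"
    using lower_env_piece_partition[OF assms] piece_partition_num_pieces by blast
  moreover have "\<forall>y. \<exists>s\<in>S. lower_env S y = s y" using lower_env_attained[OF assms(1,2)] by blast
  ultimately obtain c where "\<forall>I\<in>P. c I \<in> S \<and> (\<forall>y\<in>I. lower_env S y = c I y)"
    using piece_partition_choose_members[OF P(1) assms(1,3)] by blast
  then show ?thesis by (rule that[OF P])
qed

lemma upper_env_minimal_partitionE:
  assumes "finite S" "S \<noteq> {}" "\<forall>s\<in>S. linear_fun s"
  obtains P c where "piece_partition (upper_env S) P" "card P = num_pieces (upper_env S)"
    "\<forall>I\<in>P. c I \<in> S \<and> (\<forall>y\<in>I. upper_env S y = c I y)"
proof -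
  obtain P where P: "piece_partition (upper_env S) P" "card P = num_pieces (upper_env S)"
    using upper_env_piece_partition[OF assms] piece_partition_num_pieces by blast
  moreover have "\<forall>y. \<exists>s\<in>S. upper_env S y = s y" using upper_env_attained[OF assms(1,2)] by blast
  ultimately obtain c where "\<forall>I\<in>P. c I \<in> S \<and> (\<forall>y\<in>I. upper_env S y = c I y)"
    using piece_partition_choose_members[OF P(1) assms(1,3)] by blast
  then show ?thesis by (rule that[OF P])
qed

lemma num_pieces_lower_env_comp_le_card_meeting_pairs:
  assumes F: "finite F" "F \<noteq> {}" "\<forall>f\<in>F. linear_fun f"
    and G: "finite G" "G \<noteq> {}" "\<forall>g\<in>G. linear_fun g"
    and PF: "piece_partition (lower_env F) PF" "\<forall>I\<in>PF. fI I \<in> F \<and> (\<forall>y\<in>I. lower_env F y = fI I y)"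
    and PGd: "piece_partition (lower_env G) PGd" "\<forall>J\<in>PGd. gJ J \<in> G \<and> (\<forall>y\<in>J. lower_env G y = gJ J y)"
    and PGu: "piece_partition (upper_env G) PGu" "\<forall>J\<in>PGu. hJ J \<in> G \<and> (\<forall>y\<in>J. upper_env G y = hJ J y)"
  shows "num_pieces (lower_env {f \<circ> g | f g. f \<in> F \<and> g \<in> G})
    \<le> card (meeting_pairs PF (lower_env G) PGd) + card (meeting_pairs PF (upper_env G) PGu)"
proof -
  define H where "H = {f \<circ> g | f g. f \<in> F \<and> g \<in> G}"
  define R1 where "R1 = meeting_pairs PF (lower_env G) PGd"
  define R2 where "R2 = meeting_pairs PF (upper_env G) PGu"
  define L where "L = (\<lambda>(I, J). fI I \<circ> gJ J) ` R1 \<union> (\<lambda>(I, J). fI I \<circ> hJ J) ` R2"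
  have finR: "finite R1" "finite R2"
    unfolding R1_def R2_def using PF(1) PGd(1) PGu(1)
    by (auto intro: finite_meeting_pairs simp: piece_partition_def)
  have "L \<subseteq> H"
  proof
    fix l assume "l \<in> L"
    then obtain I J where "I \<in> PF" "(J \<in> PGd \<and> l = fI I \<circ> gJ J) \<or> (J \<in> PGu \<and> l = fI I \<circ> hJ J)"
      unfolding L_def R1_def R2_def meeting_pairs_def by auto
    then show "l \<in> H" unfolding H_def using PF(2) PGd(2) PGu(2) by blast
  qed
  have active: "\<exists>l\<in>L. lower_env H x = l x" for x
  proof -
    obtain J1 J2 where J: "J1 \<in> PGd" "x \<in> J1" "J2 \<in> PGu" "x \<in> J2"
      using PGd(1) PGu(1) unfolding piece_partition_def by blast
    have "\<Union>PF = UNIV" using PF(1) unfolding piece_partition_def by blast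
    then obtain I1 I2 where I: "I1 \<in> PF" "lower_env G x \<in> I1" "I2 \<in> PF" "upper_env G x \<in> I2"
      by blast
    have "(I1, J1) \<in> R1" "(I2, J2) \<in> R2"
      unfolding R1_def R2_def meeting_pairs_def using I J by blast+
    then have "fI I1 \<circ> gJ J1 \<in> L" "fI I2 \<circ> hJ J2 \<in> L" unfolding L_def by force+
    moreover have "(fI I1 \<circ> gJ J1) x = lower_env F (lower_env G x)"
      using PGd(2) J(1,2) PF(2) I(1,2) by simp
    moreover have "(fI I2 \<circ> hJ J2) x = lower_env F (upper_env G x)"
      using PGu(2) J(3,4) PF(2) I(3,4) by simp
    moreover have "lower_env H x = min (lower_env F (lower_env G x)) (lower_env F (upper_env G x))"
      unfolding H_def by (rule lower_env_comp[OF F G(1,2)])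
    ultimately show ?thesis by (metis min_def)
  qed
  have "finite H" unfolding H_def using F(1) G(1) by (simp add: finite_image_set2)
  then have "lower_env L = lower_env H" using \<open>L \<subseteq> H\<close> active by (rule lower_env_eqI)
  moreover have "\<forall>l\<in>L. linear_fun l"
    using \<open>L \<subseteq> H\<close> F(3) G(3) linear_fun_comp unfolding H_def by blast
  moreover have "finite L" unfolding L_def using finR by simp
  moreover have "L \<noteq> {}" using active by blast
  ultimately have "num_pieces (lower_env H) \<le> card L" using num_pieces_lower_env_le by metis
  also have "card L \<le> card R1 + card R2"
    unfolding L_def using finR by (meson card_Un_le card_image_le add_mono order_trans)
  finally show ?thesis unfolding H_def R1_def R2_def .
qed

lemma num_pieces_lower_env_comp_le:
  assumes F: "finite F" "F \<noteq> {}" "\<forall>f\<in>F. linear_fun f"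
    and G: "finite G" "G \<noteq> {}" "\<forall>g\<in>G. linear_fun g"
  shows "num_pieces (lower_env {f \<circ> g | f g. f \<in> F \<and> g \<in> G})
    \<le> 4 * num_pieces (lower_env F) + num_pieces (lower_env G) + num_pieces (upper_env G)"
proof -
  obtain PF fI where PF: "piece_partition (lower_env F) PF" "card PF = num_pieces (lower_env F)"
    "\<forall>I\<in>PF. fI I \<in> F \<and> (\<forall>y\<in>I. lower_env F y = fI I y)"
    using lower_env_minimal_partitionE[OF F] by blast
  obtain PGd gJ where PGd: "piece_partition (lower_env G) PGd" "card PGd = num_pieces (lower_env G)"
    "\<forall>J\<in>PGd. gJ J \<in> G \<and> (\<forall>y\<in>J. lower_env G y = gJ J y)"
    using lower_env_minimal_partitionE[OF G] by blast
  obtain PGu hJ where PGu: "piece_partition (upper_env G) PGu" "card PGu = num_pieces (upper_env G)"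
    "\<forall>J\<in>PGu. hJ J \<in> G \<and> (\<forall>y\<in>J. upper_env G y = hJ J y)"
    using upper_env_minimal_partitionE[OF G] by blast
  have PF_intervals: "finite PF" "disjoint PF" "\<forall>I\<in>PF. is_interval I"
    using PF(1) unfolding piece_partition_def by auto
  have "num_pieces (lower_env {f \<circ> g | f g. f \<in> F \<and> g \<in> G})
      \<le> card (meeting_pairs PF (lower_env G) PGd) + card (meeting_pairs PF (upper_env G) PGu)"
    using F G PF(1,3) PGd(1,3) PGu(1,3) by (rule num_pieces_lower_env_comp_le_card_meeting_pairs)
  also have "card (meeting_pairs PF (lower_env G) PGd) \<le> 2 * card PF + card PGd"
    using PF_intervals G(1,3) PGd(1,3) by (rule card_meeting_pairs_lower_env_le)
  also have "card (meeting_pairs PF (upper_env G) PGu) \<le> 2 * card PF + card PGu"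
    using PF_intervals G(1,3) PGu(1,3) by (rule card_meeting_pairs_upper_env_le)
  finally show ?thesis using PF(2) PGd(2) PGu(2) by simp
qed

theorem lemma1:
  fixes F G H :: "(real \<Rightarrow> real) set"
  assumes "finite F" "F \<noteq> {}" "finite G" "G \<noteq> {}"
    and "\<forall>f\<in>F. linear_fun f" "\<forall>g\<in>G. linear_fun g"
    and "H = {f \<circ> g | f g. f \<in> F \<and> g \<in> G}"
  shows "lower_env H = (\<lambda>x. min (lower_env F (lower_env G x)) (lower_env F (upper_env G x))) \<and>
    upper_env H = (\<lambda>x. max (upper_env F (lower_env G x)) (upper_env F (upper_env G x))) \<and>
    num_pieces (lower_env H) \<le> 4 * num_pieces (lower_env F)
           + 2 * num_pieces (lower_env G) + 2 * num_pieces (upper_env G) \<and>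
    num_pieces (upper_env H) \<le> 4 * num_pieces (upper_env F)
           + 2 * num_pieces (lower_env G) + 2 * num_pieces (upper_env G)"
proof -
  have F: "finite F" "F \<noteq> {}" "\<forall>f\<in>F. linear_fun f" and G: "finite G" "G \<noteq> {}" "\<forall>g\<in>G. linear_fun g"
    using assms(1-6) by auto
  have negF: "finite (uminus ` F)" "uminus ` F \<noteq> {}" "\<forall>f\<in>uminus ` F. linear_fun f"
    using F linear_fun_uminus by auto
  have H: "finite H" "H \<noteq> {}" using F(1,2) G(1,2) assms(7) by (auto simp: finite_image_set2)
  have negH: "uminus ` H = {f \<circ> g | f g. f \<in> uminus ` F \<and> g \<in> G}"
    unfolding assms(7) by (rule uminus_comp_image)
  note upper_H = upper_env_eq_uminus_lower_env[OF H] and upper_F = upper_env_eq_uminus_lower_env[OF F(1,2)]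
  show ?thesis
  proof (intro conjI ext)
    show "lower_env H x = min (lower_env F (lower_env G x)) (lower_env F (upper_env G x))" for x
      unfolding assms(7) by (rule lower_env_comp[OF F G(1,2)])
    show "upper_env H x = max (upper_env F (lower_env G x)) (upper_env F (upper_env G x))" for x
      unfolding upper_H upper_F negH using lower_env_comp[OF negF G(1,2)] by simp
    show "num_pieces (lower_env H) \<le> 4 * num_pieces (lower_env F)
           + 2 * num_pieces (lower_env G) + 2 * num_pieces (upper_env G)"
      using num_pieces_lower_env_comp_le[OF F G] unfolding assms(7) by simp
    show "num_pieces (upper_env H) \<le> 4 * num_pieces (upper_env F)
           + 2 * num_pieces (lower_env G) + 2 * num_pieces (upper_env G)"
      using num_pieces_lower_env_comp_le[OF negF G]
      unfolding upper_H upper_F negH num_pieces_uminus by simp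
  qed
qed

end
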